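(* Let $r\geq 1$ and let $\mathbf a=(a_1,\ldots,a_r)$ be positive integers. Write the partial fraction decomposition $$\frac{1}{(1-z^{a_1})\cdots(1-z^{a_r})}=\sum_{\lambda}\sum_{\ell=1}^{m(\lambda)}\frac{c_{\lambda,\ell}}{(\lambda-z)^{\ell}},$$ where $\lambda$ ranges over the distinct roots of the denominator and $m(\lambda)$ is the multiplicity of $\lambda$ as a root. Then for $1\leq m\leq r$, $c_m:=c_{1,m}$ satisfies $$c_m = \frac{(-1)^{r-m}(m-1)!}{a_1\cdots a_r} \sum_{\ell=m}^r \frac{\left\{ {\ell \atop m}\right\}} {(\ell-1)!} \sum_{i_1+\cdots+i_r=r-\ell}\frac{B_{i_1}\cdots B_{i_r}}{i_1!\cdots i_r!}a_1^{i_1} \cdots a_r^{i_r},$$ where the inner sum runs over tuples of nonnegative integers $(i_1,\ldots,i_r)$.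
   Context: $B_\ell$ are the Bernoulli numbers defined by $\frac{t}{e^t-1}=\sum_{\ell\geq0}B_\ell\frac{t^\ell}{\ell!}$. $\left\{ {\ell \atop m}\right\}$ denotes the Stirling number of the second kind. *)

theory Defs
  imports "HOL-Analysis.Analysis" "HOL-Combinatorics.Stirling"
    "HOL-Computational_Algebra.Formal_Power_Series" "HOL-Computational_Algebra.Polynomial"
begin

definition bernoulli_num :: "nat \<Rightarrow> real" where
  "bernoulli_num l = fact l * fps_nth (fps_X / (fps_exp 1 - 1)) l"

text \<open>The denominator (1 - z^a_1) ... (1 - z^a_r) as a complex polynomial
  (indices 0..r-1).\<close>
definition denom_poly :: "nat \<Rightarrow> (nat \<Rightarrow> nat) \<Rightarrow> complex poly" where
  "denom_poly r a = (\<Prod>k<r. 1 - monom 1 (a k))"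

end

theory Submission
  imports Defs
begin

unbundle no vec_syntax
notation fps_nth (infixl "$" 75)

text \<open>
  The denominator is (1 - z)^r e(z) with e(1) = a_1 ... a_r, so the partial fraction expansion
  says 1 = sum_l c_l (1 - z)^(r-l) e(z) modulo (1 - z)^r. Substituting z = e^t and writing
  w = e^t - 1, the number (-1)^(r-m) c_m is the coefficient of w^(r-m) in 1/e(e^t), i.e. the formal
  residue in t of w' / (w^(r-m+1) e(e^t)). Since 1 + e^t + ... + e^((a-1)t) = (e^(at) - 1)/w and
  at/(e^(at) - 1) = B(at) for the Bernoulli generating function B, one has
  1/e(e^t) = (w/t)^r B(a_1 t) ... B(a_r t) / (a_1 ... a_r). The residue is therefore the coefficient
  of t^(r-m) in (w/t)^(m-1) e^t B(a_1 t) ... B(a_r t) / (a_1 ... a_r); the coefficients of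
  (w/t)^(m-1) e^t are Stirling numbers, because w^m/m! is their exponential generating function,
  and those of the product of the B(a_k t) give the inner sum over i_1 + ... + i_r = r - l.
\<close>

section \<open>Partial fractions\<close>

lemma linear_power_sign_flip:
  "[:x, -1:] ^ l = smult ((-1) ^ l) ([:-x, 1:] ^ l :: 'a::comm_ring_1 poly)"
proof -
  have "[:x, -1:] = smult (-1) [:-x, 1:]" by simp
  then show ?thesis by (simp only: smult_power)
qed

lemma linear_power_dvd:
  fixes D :: "'a::field poly"
  assumes "l \<le> order x D"
  shows "[:x, -1:] ^ l dvd D"
proof -
  have "[:-x, 1:] ^ l dvd D"
    using assms by (simp add: order_divides)
  then show ?thesis
    unfolding linear_power_sign_flip by (rule smult_dvd) simp
qed

lemma poly_div_linear_power:
  fixes D :: "'a::field poly"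
  assumes "l \<le> order x D" "z \<noteq> x"
  shows "poly (D div [:x, -1:] ^ l) z = poly D z / (x - z) ^ l"
proof -
  from linear_power_dvd[OF assms(1)] obtain q where "D = [:x, -1:] ^ l * q" ..
  then show ?thesis
    using assms(2) by (simp add: poly_power)
qed

lemma partial_fractions_poly_identity:
  fixes D :: "'a::field_char_0 poly"
  assumes "D \<noteq> 0"
    and pfd: "\<forall>z. poly D z \<noteq> 0 \<longrightarrow> 1 / poly D z =
      (\<Sum>x\<in>{w. poly D w = 0}. \<Sum>l=1..order x D. c x l / (x - z) ^ l)"
  shows "(\<Sum>x\<in>{w. poly D w = 0}. \<Sum>l=1..order x D. smult (c x l) (D div [:x, -1:] ^ l)) = 1"
    (is "?Q = 1")
proof -
  have "poly ?Q z = 1" if Dz: "poly D z \<noteq> 0" for z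
  proof -
    have "poly ?Q z = poly D z * (\<Sum>x\<in>{w. poly D w = 0}. \<Sum>l=1..order x D. c x l / (x - z) ^ l)"
      unfolding poly_sum poly_smult sum_distrib_left
    proof (intro sum.cong refl)
      fix x l assume "x \<in> {w. poly D w = 0}" "l \<in> {1..order x D}"
      then have "poly (D div [:x, -1:] ^ l) z = poly D z / (x - z) ^ l"
        using Dz by (intro poly_div_linear_power) auto
      then show "c x l * poly (D div [:x, -1:] ^ l) z = poly D z * (c x l / (x - z) ^ l)"
        by simp
    qed
    also have "\<dots> = poly D z * (1 / poly D z)"
      using pfd Dz by presburger
    finally show ?thesis using Dz by simp
  qed
  then have "UNIV - {w. poly D w = 0} \<subseteq> {z. poly (?Q - 1) z = 0}"
    by auto
  moreover have "infinite (UNIV - {w. poly D w = 0})"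
    using poly_roots_finite[OF \<open>D \<noteq> 0\<close>] infinite_UNIV_char_0 by (rule Diff_infinite_finite)
  ultimately have "infinite {z. poly (?Q - 1) z = 0}"
    by (rule infinite_super)
  then show ?thesis
    using poly_roots_finite[of "?Q - 1"] by auto
qed

lemma partial_fractions_mod_root_power:
  fixes D :: "'a::field_char_0 poly"
  assumes "D \<noteq> 0" "poly D y = 0"
    and pfd: "\<forall>z. poly D z \<noteq> 0 \<longrightarrow> 1 / poly D z =
      (\<Sum>x\<in>{w. poly D w = 0}. \<Sum>l=1..order x D. c x l / (x - z) ^ l)"
  obtains R where "1 = (\<Sum>l=1..order y D. smult (c y l) (D div [:y, -1:] ^ l))
    + [:-y, 1:] ^ order y D * R"
proof -
  define S where "S = {w. poly D w = 0}"
  define q where "q x l = D div [:x, -1:] ^ l" for x l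
  have Dq: "D = [:x, -1:] ^ l * q x l" if "l \<le> order x D" for x l
    unfolding q_def using linear_power_dvd[OF that] by simp
  have "[:-y, 1:] ^ order y D dvd q x l" if "x \<in> S - {y}" "l \<in> {1..order x D}" for x l
  proof -
    have l: "l \<le> order x D" using that by simp
    have "order y D = order y ([:x, -1:] ^ l) + order y (q x l)"
      using Dq[OF l] \<open>D \<noteq> 0\<close> by (metis order_mult)
    moreover have "order y ([:x, -1:] ^ l) = 0"
      using that by (intro order_0I) (simp add: poly_power)
    ultimately show ?thesis by (simp add: order_divides)
  qed
  then have "[:-y, 1:] ^ order y D dvd (\<Sum>x\<in>S - {y}. \<Sum>l=1..order x D. smult (c x l) (q x l))"
    by (intro dvd_sum dvd_smult) auto
  then obtain R where R: "(\<Sum>x\<in>S - {y}. \<Sum>l=1..order x D. smult (c x l) (q x l)) = [:-y, 1:] ^ order y D * R" ..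
  have "1 = (\<Sum>x\<in>S. \<Sum>l=1..order x D. smult (c x l) (q x l))"
    using partial_fractions_poly_identity[OF \<open>D \<noteq> 0\<close> pfd] by (simp add: S_def q_def)
  also have "\<dots> = (\<Sum>l=1..order y D. smult (c y l) (q y l)) + [:-y, 1:] ^ order y D * R"
    using poly_roots_finite[OF \<open>D \<noteq> 0\<close>] \<open>poly D y = 0\<close> by (simp add: S_def sum.remove R[symmetric])
  finally show ?thesis using that unfolding q_def by blast
qed

section \<open>The denominator (1 - z^a_1) ... (1 - z^a_r)\<close>

definition denom_cofactor :: "nat \<Rightarrow> (nat \<Rightarrow> nat) \<Rightarrow> complex poly" where
  "denom_cofactor r a = (\<Prod>k<r. \<Sum>s<a k. monom 1 s)"

lemma one_minus_monom_eq: "1 - monom (1::'a::comm_ring_1) n = [:1, -1:] * (\<Sum>s<n. monom 1 s)"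
proof -
  have "[:1, -1:] = 1 - [:0, 1::'a:]"
    by (simp add: one_pCons)
  then show ?thesis
    by (simp add: monom_altdef one_diff_power_eq)
qed

lemma denom_poly_eq: "denom_poly r a = [:1, -1:] ^ r * denom_cofactor r a"
  unfolding denom_poly_def denom_cofactor_def one_minus_monom_eq prod.distrib by simp

lemma poly_denom_cofactor_1: "poly (denom_cofactor r a) 1 = (\<Prod>k<r. of_nat (a k))"
  by (simp add: denom_cofactor_def poly_prod poly_sum poly_monom)

lemma order_1_denom_poly:
  assumes "\<forall>k<r. a k > 0"
  shows "order 1 (denom_poly r a) = r"
proof -
  have cofactor_1: "poly (denom_cofactor r a) 1 \<noteq> 0"
    using assms by (simp add: poly_denom_cofactor_1)
  then have "denom_cofactor r a \<noteq> 0" by auto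
  have "order 1 (denom_poly r a) = order 1 ([:-1, 1:] ^ r * denom_cofactor r a)"
    unfolding denom_poly_eq linear_power_sign_flip by (simp add: order_smult)
  also have "\<dots> = r"
    using cofactor_1 \<open>denom_cofactor r a \<noteq> 0\<close> by (subst order_mult) (auto simp: order_power_n_n order_0I)
  finally show ?thesis .
qed

lemma denom_poly_partial_fractions:
  fixes c :: "complex \<Rightarrow> nat \<Rightarrow> complex"
  assumes "r \<ge> 1" and apos: "\<forall>k<r. a k > 0"
    and pfd: "\<forall>z. poly (denom_poly r a) z \<noteq> 0 \<longrightarrow> 1 / poly (denom_poly r a) z =
      (\<Sum>x\<in>{w. poly (denom_poly r a) w = 0}.
         \<Sum>l=1..order x (denom_poly r a). c x l / (x - z) ^ l)"
  obtains R where "1 = (\<Sum>l=1..r. smult (c 1 l) ([:1, -1:] ^ (r - l) * denom_cofactor r a))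
    + [:-1, 1:] ^ r * R"
proof -
  have "poly (denom_cofactor r a) 1 \<noteq> 0"
    using apos by (simp add: poly_denom_cofactor_1)
  then have "denom_poly r a \<noteq> 0"
    by (auto simp: denom_poly_eq)
  moreover have "poly (denom_poly r a) 1 = 0"
    using \<open>r \<ge> 1\<close> by (simp add: denom_poly_eq)
  ultimately obtain R where "1 = (\<Sum>l=1..order 1 (denom_poly r a). smult (c 1 l) (denom_poly r a div [:1, -1:] ^ l))
      + [:-1, 1:] ^ order 1 (denom_poly r a) * R"
    by (rule partial_fractions_mod_root_power[OF _ _ pfd])
  also have "(\<Sum>l=1..order 1 (denom_poly r a). smult (c 1 l) (denom_poly r a div [:1, -1:] ^ l))
      = (\<Sum>l=1..r. smult (c 1 l) ([:1, -1:] ^ (r - l) * denom_cofactor r a))"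
  proof (intro sum.cong arg_cong[where f = "smult _"])
    show "{1..order 1 (denom_poly r a)} = {1..r}"
      by (simp add: order_1_denom_poly[OF apos])
    fix l assume "l \<in> {1..r}"
    then have "denom_poly r a = [:1, -1:] ^ l * ([:1, -1:] ^ (r - l) * denom_cofactor r a)"
      by (simp add: denom_poly_eq mult.assoc[symmetric] power_add[symmetric])
    then show "denom_poly r a div [:1, -1:] ^ l = [:1, -1:] ^ (r - l) * denom_cofactor r a"
      by simp
  qed
  finally show ?thesis
    using that by (simp add: order_1_denom_poly[OF apos])
qed

section \<open>Substituting z = e^t\<close>

text \<open>
  The series p(e^t), computed as p(1 + w) at w = e^t - 1 because composition of formal power series
  requires a zero constant term.
\<close>

definition poly_at_exp :: "'a::field_char_0 poly \<Rightarrow> 'a fps" where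
  "poly_at_exp p = fps_of_poly (pcompose p [:1, 1:]) oo (fps_exp 1 - 1)"

lemma poly_at_exp_0 [simp]: "poly_at_exp 0 = 0"
  by (simp add: poly_at_exp_def)

lemma poly_at_exp_1 [simp]: "poly_at_exp 1 = 1"
  by (simp add: poly_at_exp_def pcompose_1)

lemma poly_at_exp_add [simp]: "poly_at_exp (p + q) = poly_at_exp p + poly_at_exp q"
  by (simp add: poly_at_exp_def pcompose_add fps_of_poly_add fps_compose_add_distrib)

lemma poly_at_exp_mult [simp]: "poly_at_exp (p * q) = poly_at_exp p * poly_at_exp q"
  by (simp add: poly_at_exp_def pcompose_mult fps_of_poly_mult fps_compose_mult_distrib)

lemma poly_at_exp_smult [simp]: "poly_at_exp (smult c p) = fps_const c * poly_at_exp p"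
  by (simp add: poly_at_exp_def pcompose_smult fps_of_poly_smult fps_const_mult_apply_left)

lemma poly_at_exp_sum [simp]: "poly_at_exp (sum f A) = (\<Sum>x\<in>A. poly_at_exp (f x))"
  by (induction A rule: infinite_finite_induct) simp_all

lemma poly_at_exp_prod [simp]: "poly_at_exp (prod f A) = (\<Prod>x\<in>A. poly_at_exp (f x))"
  by (induction A rule: infinite_finite_induct) simp_all

lemma poly_at_exp_power [simp]: "poly_at_exp (p ^ n) = poly_at_exp p ^ n"
  by (induction n) simp_all

lemma poly_at_exp_linear [simp]: "poly_at_exp [:a, b:] = fps_const (a + b) + fps_const b * (fps_exp 1 - 1)"
  by (simp add: poly_at_exp_def pcompose_pCons fps_of_poly_pCons fps_compose_add_distrib
      fps_compose_mult_distrib)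

lemma poly_at_exp_monom [simp]: "poly_at_exp (monom 1 s) = fps_exp 1 ^ s"
  by (simp add: monom_altdef)

lemma denom_poly_partial_fractions_exp:
  fixes c :: "complex \<Rightarrow> nat \<Rightarrow> complex"
  assumes "r \<ge> 1" and apos: "\<forall>k<r. a k > 0"
    and pfd: "\<forall>z. poly (denom_poly r a) z \<noteq> 0 \<longrightarrow> 1 / poly (denom_poly r a) z =
      (\<Sum>x\<in>{w. poly (denom_poly r a) w = 0}.
         \<Sum>l=1..order x (denom_poly r a). c x l / (x - z) ^ l)"
  obtains R where "1 = (\<Sum>l=1..r. fps_const ((-1) ^ (r - l) * c 1 l) * (fps_exp 1 - 1) ^ (r - l)
      * poly_at_exp (denom_cofactor r a)) + (fps_exp 1 - 1) ^ r * R"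
proof -
  obtain R where "1 = (\<Sum>l=1..r. smult (c 1 l) ([:1, -1:] ^ (r - l) * denom_cofactor r a))
      + [:-1, 1:] ^ r * R"
    using denom_poly_partial_fractions[OF assms] .
  then have "poly_at_exp 1 = poly_at_exp ((\<Sum>l=1..r. smult (c 1 l) ([:1, -1:] ^ (r - l) * denom_cofactor r a))
      + [:-1, 1:] ^ r * R)"
    by simp
  then have "1 = (\<Sum>l=1..r. fps_const ((-1) ^ (r - l) * c 1 l) * (fps_exp 1 - 1) ^ (r - l)
      * poly_at_exp (denom_cofactor r a)) + (fps_exp 1 - 1) ^ r * poly_at_exp R"
    by (simp add: power_mult_distrib mult_ac flip: fps_const_mult)
  then show ?thesis ..
qed

section \<open>Formal residues\<close>

lemma residue_inverse_power_deriv: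
  fixes U :: "'a::field_char_0 fps"
  assumes U0: "U $ 0 \<noteq> 0"
  shows "(inverse U ^ Suc k * fps_deriv (fps_X * U)) $ k = (if k = 0 then 1 else 0)"
proof -
  define V where "V = inverse U"
  have VU: "V * U = 1"
    using U0 by (simp add: V_def inverse_mult_eq_1)
  have expand: "V ^ Suc k * fps_deriv (fps_X * U) = V ^ k + fps_X * (V ^ Suc k * fps_deriv U)"
  proof -
    have "V ^ Suc k * fps_deriv (fps_X * U) = V ^ k * (V * U) + fps_X * (V ^ Suc k * fps_deriv U)"
      by (simp add: fps_deriv_mult algebra_simps)
    then show ?thesis using VU by simp
  qed
  show ?thesis
  proof (cases k)
    case 0
    then show ?thesis
      unfolding V_def[symmetric] expand by simp
  next
    case (Suc k')
    have "fps_deriv V = - fps_deriv U * V ^ 2"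
      using fps_inverse_deriv[OF U0] by (simp add: V_def)
    moreover have "fps_deriv (V ^ k) = fps_const (of_nat k) * fps_deriv V * V ^ k'"
      using Suc by (subst fps_deriv_power) simp
    ultimately have "fps_deriv (V ^ k) = - fps_const (of_nat k) * (V ^ Suc k * fps_deriv U)"
      using Suc by (simp add: power2_eq_square algebra_simps del: fps_const_neg)
    then have "of_nat k * (V ^ Suc k * fps_deriv U) $ k' = - (fps_deriv (V ^ k)) $ k'"
      by simp
    also have "\<dots> = of_nat k * - (V ^ k) $ k"
      by (simp only: fps_neg_nth fps_deriv_nth Suc Suc_eq_plus1 mult_minus_right)
    finally have "(V ^ Suc k * fps_deriv U) $ k' = - (V ^ k) $ k"
      by (rule mult_left_cancel[THEN iffD1, rotated]) (simp add: Suc del: of_nat_Suc)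
    then show ?thesis
      unfolding V_def[symmetric] expand using Suc by simp
  qed
qed

text \<open>
  With W = t U, the coefficient of t^j in W^i W' / U^(j+1) is the formal residue of W^(i-j-1) W',
  which is 1 if i = j and 0 otherwise.
\<close>

lemma residue_power_deriv:
  fixes U :: "'a::field_char_0 fps"
  defines "W \<equiv> fps_X * U"
  assumes U0: "U $ 0 \<noteq> 0"
  shows "(W ^ i * fps_deriv W * inverse U ^ Suc j) $ j = (if i = j then 1 else 0)"
proof -
  have split: "W ^ i * fps_deriv W * inverse U ^ Suc j = fps_X ^ i * (U ^ i * inverse U ^ Suc j * fps_deriv W)"
    unfolding W_def power_mult_distrib by (simp only: ac_simps)
  show ?thesis
  proof (cases "i \<le> j")
    case True
    have "inverse U ^ Suc j = inverse U ^ i * inverse U ^ Suc (j - i)"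
      using True by (simp add: power_add[symmetric])
    then have "U ^ i * inverse U ^ Suc j = (U * inverse U) ^ i * inverse U ^ Suc (j - i)"
      by (simp only: power_mult_distrib mult.assoc)
    also have "\<dots> = inverse U ^ Suc (j - i)"
      using U0 by (simp add: inverse_mult_eq_1')
    finally have UV: "U ^ i * inverse U ^ Suc j = inverse U ^ Suc (j - i)" .
    have "(W ^ i * fps_deriv W * inverse U ^ Suc j) $ j
        = (inverse U ^ Suc (j - i) * fps_deriv (fps_X * U)) $ (j - i)"
      unfolding split UV fps_X_power_mult_nth using True by (simp add: W_def)
    also have "\<dots> = (if j - i = 0 then 1 else 0)"
      by (rule residue_inverse_power_deriv[OF U0])
    finally show ?thesis
      using True by simp
  next
    case False
    then show ?thesis
      unfolding split by (simp add: fps_X_power_mult_nth)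
  qed
qed

lemma coeff_of_power_expansion:
  fixes U P Q R :: "'a::field_char_0 fps" and c :: "nat \<Rightarrow> 'a"
  defines "W \<equiv> fps_X * U"
  assumes U0: "U $ 0 \<noteq> 0" and PQ: "P * Q = 1"
    and expansion: "1 = (\<Sum>l=1..r. fps_const (c l) * W ^ (r - l) * P) + W ^ r * R"
    and m: "1 \<le> m" "m \<le> r"
  shows "c m = (Q * fps_deriv W * inverse U ^ Suc (r - m)) $ (r - m)"
proof -
  define K where "K = fps_deriv W * inverse U ^ Suc (r - m)"
  have PQ': "P * (Q * X) = X" for X
    by (simp add: mult.assoc[symmetric] PQ)
  have "Q * K = ((\<Sum>l=1..r. fps_const (c l) * W ^ (r - l) * P) + W ^ r * R) * (Q * K)"
    by (subst expansion[symmetric]) simp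
  also have "\<dots> = (\<Sum>l=1..r. fps_const (c l) * (W ^ (r - l) * K)) + fps_X ^ r * (U ^ r * R * Q * K)"
    unfolding distrib_right sum_distrib_right W_def power_mult_distrib
    by (simp only: mult.assoc PQ')
  finally have "(Q * K) $ (r - m) = (\<Sum>l=1..r. c l * (W ^ (r - l) * K) $ (r - m))"
    using m by (simp add: fps_sum_nth fps_X_power_mult_nth)
  also have "\<dots> = (\<Sum>l=1..r. if l = m then c l else 0)"
  proof (intro sum.cong refl)
    fix l assume "l \<in> {1..r}"
    then have "(r - l = r - m) = (l = m)"
      using m by auto
    then show "c l * (W ^ (r - l) * K) $ (r - m) = (if l = m then c l else 0)"
      using residue_power_deriv[OF U0, of "r - l" "r - m"]
      by (simp add: K_def W_def mult.assoc)
  qed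
  also have "\<dots> = c m"
    using m by simp
  finally show ?thesis
    by (simp add: K_def mult.assoc)
qed

section \<open>Powers of e^t - 1 and Stirling numbers\<close>

lemma fps_nth_exp_minus_one_power:
  "((fps_exp 1 - 1 :: 'a::field_char_0 fps) ^ m) $ n = fact m * of_nat (Stirling n m) / fact n"
proof (induction m arbitrary: n)
  case 0
  then show ?case by (cases n) simp_all
next
  case (Suc m)
  note IHm = Suc.IH
  define W :: "'a fps" where "W = fps_exp 1 - 1"
  have "fps_deriv (W ^ Suc m) = fps_const (of_nat (Suc m)) * (W ^ m + W ^ Suc m)"
    by (subst fps_deriv_power) (simp add: W_def algebra_simps)
  then have "(fps_deriv (W ^ Suc m)) $ n = of_nat (Suc m) * ((W ^ m) $ n + (W ^ Suc m) $ n)" for n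
    by simp
  then have deriv: "(W ^ Suc m) $ Suc n = of_nat (Suc m) * ((W ^ m) $ n + (W ^ Suc m) $ n) / of_nat (Suc n)" for n
    unfolding fps_deriv_nth by (simp add: field_simps del: of_nat_Suc)
  show ?case
  proof (induction n)
    case 0
    then show ?case by (simp add: W_def)
  next
    case (Suc n)
    show ?case
      unfolding W_def[symmetric] deriv Suc.IH[folded W_def] IHm[folded W_def]
      by (simp add: field_simps del: of_nat_Suc) (simp add: algebra_simps)
  qed
qed

definition expm1_quot_fps :: "'a::field_char_0 fps" where
  "expm1_quot_fps = fps_shift 1 (fps_exp 1 - 1)"

lemma fps_X_mult_expm1_quot_fps: "fps_X * expm1_quot_fps = fps_exp 1 - 1"
  unfolding expm1_quot_fps_def by (rule fps_ext) simp

lemma expm1_quot_fps_nth_0 [simp]: "expm1_quot_fps $ 0 = 1"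
  by (simp add: expm1_quot_fps_def)

lemma fps_nth_expm1_quot_power_mult_exp:
  assumes "m \<ge> 1"
  shows "(expm1_quot_fps ^ (m - 1) * fps_exp 1 :: 'a::field_char_0 fps) $ n
    = fact (m - 1) * of_nat (Stirling (n + m) m) / fact (n + m - 1)"
proof -
  define U :: "'a fps" where "U = expm1_quot_fps"
  define W :: "'a fps" where "W = fps_exp 1 - 1"
  have "fps_deriv (W ^ m) = fps_const (of_nat m) * fps_exp 1 * W ^ (m - 1)"
    by (subst fps_deriv_power) (simp add: W_def)
  also have "\<dots> = fps_X ^ (m - 1) * (fps_const (of_nat m) * (U ^ (m - 1) * fps_exp 1))"
    unfolding W_def U_def fps_X_mult_expm1_quot_fps[symmetric] power_mult_distrib by (simp only: ac_simps)
  finally have "(fps_deriv (W ^ m)) $ (n + (m - 1)) = of_nat m * (U ^ (m - 1) * fps_exp 1) $ n"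
    by (simp add: fps_X_power_mult_nth)
  moreover have "n + (m - 1) + 1 = n + m"
    using assms by simp
  ultimately have "of_nat m * (U ^ (m - 1) * fps_exp 1) $ n = of_nat (n + m) * (W ^ m) $ (n + m)"
    unfolding fps_deriv_nth by (metis Suc_eq_plus1)
  also have "\<dots> = of_nat (n + m) * fact m * of_nat (Stirling (n + m) m) / fact (n + m)"
    unfolding W_def fps_nth_exp_minus_one_power by simp
  also have "\<dots> = of_nat m * (fact (m - 1) * of_nat (Stirling (n + m) m) / fact (n + m - 1))"
  proof -
    have "(fact m :: 'a) = of_nat m * fact (m - 1)" "(fact (n + m) :: 'a) = of_nat (n + m) * fact (n + m - 1)"
      using assms by (simp_all add: fact_reduce)
    moreover have "(of_nat (n + m) :: 'a) \<noteq> 0"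
      using assms by (simp del: of_nat_add)
    ultimately show ?thesis by simp
  qed
  finally show ?thesis
    unfolding U_def using assms by (subst (asm) mult_left_cancel) simp_all
qed

lemma fps_const_prod: "(\<Prod>x\<in>A. fps_const (f x)) = fps_const (\<Prod>x\<in>A. f x)"
  by (induction A rule: infinite_finite_induct) simp_all

definition compositions :: "nat \<Rightarrow> nat \<Rightarrow> (nat \<Rightarrow> nat) set" where
  "compositions r n = {i \<in> {..<r} \<rightarrow>\<^sub>E {..n}. (\<Sum>k<r. i k) = n}"

lemma finite_compositions: "finite (compositions r n)"
  unfolding compositions_def by (simp add: finite_PiE)

lemma compositions_Suc_bij:
  "bij_betw (\<lambda>(j, i). i(r := n - j)) (SIGMA j:{0..n}. compositions r j) (compositions (Suc r) n)"
proof (rule bij_betw_byWitness[where f' = "\<lambda>i. (n - i r, restrict i {..<r})"])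
  show "\<forall>x\<in>SIGMA j:{0..n}. compositions r j. (\<lambda>i. (n - i r, restrict i {..<r})) ((\<lambda>(j, i). i(r := n - j)) x) = x"
    by (auto simp: compositions_def PiE_def extensional_def restrict_def fun_eq_iff)
  show "\<forall>i\<in>compositions (Suc r) n. (\<lambda>(j, i). i(r := n - j)) (n - i r, restrict i {..<r}) = i"
    by (auto simp: compositions_def PiE_def extensional_def fun_eq_iff)
  show "(\<lambda>(j, i). i(r := n - j)) ` (SIGMA j:{0..n}. compositions r j) \<subseteq> compositions (Suc r) n"
  proof clarify
    fix j i assume "j \<in> {0..n}" "i \<in> compositions r j"
    then have "\<forall>k<r. i k \<le> n" and "(\<Sum>k<r. i k) = j" and "i \<in> extensional {..<r}"
      by (auto simp: compositions_def PiE_def Pi_iff intro: order_trans)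
    with \<open>j \<in> {0..n}\<close> show "i(r := n - j) \<in> compositions (Suc r) n"
      by (auto simp: compositions_def PiE_def extensional_def lessThan_Suc)
  qed
  show "(\<lambda>i. (n - i r, restrict i {..<r})) ` compositions (Suc r) n \<subseteq> (SIGMA j:{0..n}. compositions r j)"
  proof (rule image_subsetI)
    fix i assume i: "i \<in> compositions (Suc r) n"
    then have sum: "(\<Sum>k<r. i k) = n - i r"
      by (auto simp: compositions_def lessThan_Suc)
    have "i k \<le> (\<Sum>k<r. i k)" if "k < r" for k
      using that by (intro member_le_sum) auto
    with i sum show "(n - i r, restrict i {..<r}) \<in> (SIGMA j:{0..n}. compositions r j)"
      by (auto simp: compositions_def)
  qed
qed

lemma fps_prod_nth_compositions:
  fixes F :: "nat \<Rightarrow> 'a::comm_ring_1 fps"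
  shows "(\<Prod>k<r. F k) $ n = (\<Sum>i\<in>compositions r n. \<Prod>k<r. F k $ i k)"
proof (induction r arbitrary: n)
  case 0
  have "compositions 0 n = (if n = 0 then {\<lambda>_. undefined} else {})"
    by (auto simp: compositions_def)
  then show ?case by simp
next
  case (Suc r)
  have "(\<Prod>k<Suc r. F k) $ n = (\<Sum>j=0..n. (\<Prod>k<r. F k) $ j * F r $ (n - j))"
    by (simp add: fps_mult_nth)
  also have "\<dots> = (\<Sum>j=0..n. \<Sum>i\<in>compositions r j. (\<Prod>k<r. F k $ i k) * F r $ (n - j))"
    by (simp add: Suc.IH sum_distrib_right)
  also have "\<dots> = (\<Sum>(j, i)\<in>(SIGMA j:{0..n}. compositions r j). (\<Prod>k<r. F k $ i k) * F r $ (n - j))"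
    by (rule sum.Sigma) (simp_all add: finite_compositions)
  also have "\<dots> = (\<Sum>(j, i)\<in>(SIGMA j:{0..n}. compositions r j).
      (\<Prod>k<r. F k $ (i(r := n - j)) k) * F r $ ((i(r := n - j)) r))"
    by (intro sum.cong refl prod.cong) auto
  also have "\<dots> = (\<Sum>i\<in>compositions (Suc r) n. (\<Prod>k<r. F k $ i k) * F r $ i r)"
    using sum.reindex_bij_betw[OF compositions_Suc_bij[of r n], of "\<lambda>i. (\<Prod>k<r. F k $ i k) * F r $ i r"]
    by (simp only: case_prod_unfold)
  also have "\<dots> = (\<Sum>i\<in>compositions (Suc r) n. \<Prod>k<Suc r. F k $ i k)"
    by (simp add: lessThan_Suc mult.commute)
  finally show ?case .
qed

section \<open>Bernoulli numbers\<close>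

definition bernoulli_fps :: "complex fps" where
  "bernoulli_fps = Abs_fps (\<lambda>n. of_real (bernoulli_num n) / fact n)"

lemma bernoulli_fps_mult_expm1: "bernoulli_fps * (fps_exp 1 - 1) = fps_X"
proof (rule fps_ext)
  fix n
  define B :: "real fps" where "B = fps_X / (fps_exp 1 - 1)"
  have "fps_X = (fps_exp 1 - 1) * inverse (expm1_quot_fps :: real fps)"
    by (simp add: fps_X_mult_expm1_quot_fps[symmetric] mult.assoc inverse_mult_eq_1')
  then have real_identity: "B * (fps_exp 1 - 1) = fps_X"
    unfolding B_def by (metis dvd_div_mult_self dvd_triv_left)
  have "(bernoulli_fps * (fps_exp 1 - 1)) $ n
      = (\<Sum>i=0..n. of_real (B $ i * (fps_exp 1 - 1 :: real fps) $ (n - i)))"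
    unfolding fps_mult_nth
    by (intro sum.cong refl) (simp add: bernoulli_fps_def B_def bernoulli_num_def)
  also have "\<dots> = of_real ((B * (fps_exp 1 - 1)) $ n)"
    by (simp add: fps_mult_nth)
  finally show "(bernoulli_fps * (fps_exp 1 - 1)) $ n = fps_X $ n"
    unfolding real_identity by simp
qed

lemma bernoulli_fps_scaled_mult_expm1:
  "(bernoulli_fps oo (fps_const c * fps_X)) * (fps_exp c - 1) = fps_const c * fps_X"
proof -
  have "fps_exp 1 oo (fps_const c * fps_X) = fps_exp c"
    by (simp add: fps_compose_linear fps_exp_def power_divide)
  then have "(fps_exp 1 - 1) oo (fps_const c * fps_X) = fps_exp c - 1"
    unfolding fps_compose_sub_distrib by simp
  then show ?thesis
    using arg_cong[OF bernoulli_fps_mult_expm1, of "\<lambda>f. f oo (fps_const c * fps_X)"]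
    by (simp add: fps_compose_mult_distrib)
qed

lemma geometric_exp_sum_mult_bernoulli_fps:
  "(\<Sum>s<a. fps_exp 1 ^ s) * (bernoulli_fps oo (fps_const (of_nat a) * fps_X)) * expm1_quot_fps
    = fps_const (of_nat a)"
proof -
  have "fps_X * ((\<Sum>s<a. fps_exp 1 ^ s) * (bernoulli_fps oo (fps_const (of_nat a) * fps_X)) * expm1_quot_fps)
      = (bernoulli_fps oo (fps_const (of_nat a) * fps_X)) * ((fps_exp 1 - 1) * (\<Sum>s<a. fps_exp 1 ^ s))"
    by (simp only: fps_X_mult_expm1_quot_fps[symmetric] ac_simps)
  also have "(fps_exp 1 - 1) * (\<Sum>s<a. fps_exp 1 ^ s) = fps_exp (of_nat a) - (1 :: complex fps)"
    unfolding power_diff_1_eq[symmetric] by (simp add: fps_exp_power_mult)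
  also have "(bernoulli_fps oo (fps_const (of_nat a) * fps_X)) * (fps_exp (of_nat a) - 1)
      = fps_X * fps_const (of_nat a)"
    by (subst bernoulli_fps_scaled_mult_expm1) (rule mult.commute)
  finally show ?thesis
    by (simp add: mult_left_cancel)
qed

definition bernoulli_prod_fps :: "nat \<Rightarrow> (nat \<Rightarrow> nat) \<Rightarrow> complex fps" where
  "bernoulli_prod_fps r a = (\<Prod>k<r. bernoulli_fps oo (fps_const (of_nat (a k)) * fps_X))"

lemma poly_at_exp_denom_cofactor_inverse:
  assumes "\<forall>k<r. a k > 0"
  shows "poly_at_exp (denom_cofactor r a) *
    (fps_const (inverse (\<Prod>k<r. of_nat (a k))) * (bernoulli_prod_fps r a * expm1_quot_fps ^ r)) = 1"
proof -
  define A where "A = (\<Prod>k<r. of_nat (a k) :: complex)"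
  have "poly_at_exp (denom_cofactor r a) * (bernoulli_prod_fps r a * expm1_quot_fps ^ r)
      = (\<Prod>k<r. (\<Sum>s<a k. fps_exp 1 ^ s) * (bernoulli_fps oo (fps_const (of_nat (a k)) * fps_X)) * expm1_quot_fps)"
    by (simp add: denom_cofactor_def bernoulli_prod_fps_def prod.distrib mult.assoc)
  also have "\<dots> = fps_const A"
    by (simp add: A_def geometric_exp_sum_mult_bernoulli_fps fps_const_prod)
  finally have product: "poly_at_exp (denom_cofactor r a) * (bernoulli_prod_fps r a * expm1_quot_fps ^ r)
      = fps_const A" .
  have "poly_at_exp (denom_cofactor r a) * (fps_const (inverse A) * (bernoulli_prod_fps r a * expm1_quot_fps ^ r))
      = fps_const (inverse A) * (poly_at_exp (denom_cofactor r a) * (bernoulli_prod_fps r a * expm1_quot_fps ^ r))"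
    by (rule mult.left_commute)
  also have "\<dots> = fps_const (inverse A) * fps_const A"
    unfolding product ..
  also have "\<dots> = 1"
    using assms by (simp add: A_def)
  finally show ?thesis
    unfolding A_def .
qed

lemma bernoulli_prod_fps_nth:
  "bernoulli_prod_fps r a $ p =
    (\<Sum>i\<in>compositions r p. \<Prod>k<r. of_real (bernoulli_num (i k)) / fact (i k) * of_nat (a k) ^ i k)"
  unfolding bernoulli_prod_fps_def fps_prod_nth_compositions fps_compose_linear bernoulli_fps_def
  by (simp add: mult_ac)

lemma bernoulli_stirling_residue:
  assumes m: "1 \<le> m" "m \<le> r"
  shows "(bernoulli_prod_fps r a * expm1_quot_fps ^ r * fps_exp 1 * inverse expm1_quot_fps ^ Suc (r - m)) $ (r - m)
    = fact (m - 1) * (\<Sum>l=m..r. of_nat (Stirling l m) / fact (l - 1) *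
        (\<Sum>i\<in>compositions r (r - l). \<Prod>k<r. of_real (bernoulli_num (i k)) / fact (i k) * of_nat (a k) ^ i k))"
proof -
  define U :: "complex fps" where "U = expm1_quot_fps"
  define b :: "nat \<Rightarrow> complex" where
    "b p = (\<Sum>i\<in>compositions r p. \<Prod>k<r. of_real (bernoulli_num (i k)) / fact (i k) * of_nat (a k) ^ i k)" for p
  have "(m - 1) + Suc (r - m) = r"
    using m by simp
  then have "U ^ r = U ^ (m - 1) * U ^ Suc (r - m)"
    by (simp only: power_add[symmetric])
  then have "U ^ r * inverse U ^ Suc (r - m) = U ^ (m - 1) * (U * inverse U) ^ Suc (r - m)"
    by (simp only: power_mult_distrib mult.assoc)
  also have "\<dots> = U ^ (m - 1)"
    by (simp add: U_def inverse_mult_eq_1')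
  finally have regroup: "bernoulli_prod_fps r a * U ^ r * fps_exp 1 * inverse U ^ Suc (r - m)
      = (U ^ (m - 1) * fps_exp 1) * bernoulli_prod_fps r a"
    by (simp add: mult_ac)
  have "(bernoulli_prod_fps r a * U ^ r * fps_exp 1 * inverse U ^ Suc (r - m)) $ (r - m)
      = (\<Sum>n=0..r - m. fact (m - 1) * of_nat (Stirling (n + m) m) / fact (n + m - 1) * b (r - m - n))"
    unfolding regroup fps_mult_nth[of "U ^ (m - 1) * fps_exp 1"]
    unfolding U_def
      fps_nth_expm1_quot_power_mult_exp[OF m(1)] bernoulli_prod_fps_nth b_def by simp
  also have "\<dots> = (\<Sum>l=m..r. fact (m - 1) * of_nat (Stirling l m) / fact (l - 1) * b (r - l))"
    using m sum.shift_bounds_cl_nat_ivl[of "\<lambda>l. fact (m - 1) * of_nat (Stirling l m) / fact (l - 1) * b (r - l)" 0 m "r - m"]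
    by (simp add: add.commute)
  finally show ?thesis
    by (simp add: U_def b_def sum_distrib_left mult_ac)
qed

theorem proposition4p5:
  fixes r :: nat and a :: "nat \<Rightarrow> nat" and c :: "complex \<Rightarrow> nat \<Rightarrow> complex" and m :: nat
  assumes r: "r \<ge> 1"
    and apos: "\<forall>k<r. a k > 0"
    and pfd: "\<forall>z. poly (denom_poly r a) z \<noteq> 0 \<longrightarrow>
       1 / poly (denom_poly r a) z =
       (\<Sum>x\<in>{w. poly (denom_poly r a) w = 0}.
          \<Sum>l=1..order x (denom_poly r a). c x l / (x - z) ^ l)"
    and m: "1 \<le> m" "m \<le> r"
  shows "c 1 m =
    (-1) ^ (r - m) * fact (m - 1) / (\<Prod>k<r. of_nat (a k)) *
    (\<Sum>l=m..r. of_nat (Stirling l m) / fact (l - 1) *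
       (\<Sum>i\<in>{i \<in> {..<r} \<rightarrow>\<^sub>E {..r - l}. (\<Sum>k<r. i k) = r - l}.
          \<Prod>k<r. complex_of_real (bernoulli_num (i k)) / fact (i k) * of_nat (a k) ^ i k))"
proof -
  define A where "A = (\<Prod>k<r. of_nat (a k) :: complex)"
  define Q where "Q = fps_const (inverse A) * (bernoulli_prod_fps r a * expm1_quot_fps ^ r)"
  obtain R where expansion: "1 = (\<Sum>l=1..r. fps_const ((-1) ^ (r - l) * c 1 l) * (fps_X * expm1_quot_fps) ^ (r - l)
      * poly_at_exp (denom_cofactor r a)) + (fps_X * expm1_quot_fps) ^ r * R"
    using denom_poly_partial_fractions_exp[OF r apos pfd] unfolding fps_X_mult_expm1_quot_fps .
  have "(-1) ^ (r - m) * c 1 m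
      = (Q * fps_deriv (fps_X * expm1_quot_fps) * inverse expm1_quot_fps ^ Suc (r - m)) $ (r - m)"
    using coeff_of_power_expansion[where c = "\<lambda>l. (-1) ^ (r - l) * c 1 l", OF _ _ expansion m]
      poly_at_exp_denom_cofactor_inverse[OF apos, folded A_def, folded Q_def]
    by simp
  also have "\<dots> = inverse A *
      (bernoulli_prod_fps r a * expm1_quot_fps ^ r * fps_exp 1 * inverse expm1_quot_fps ^ Suc (r - m)) $ (r - m)"
    unfolding fps_X_mult_expm1_quot_fps Q_def by (simp add: mult.assoc)
  also have "\<dots> = inverse A * (fact (m - 1) * (\<Sum>l=m..r. of_nat (Stirling l m) / fact (l - 1) *
        (\<Sum>i\<in>compositions r (r - l). \<Prod>k<r. of_real (bernoulli_num (i k)) / fact (i k) * of_nat (a k) ^ i k)))"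
    by (simp only: bernoulli_stirling_residue[OF m])
  finally have signed: "(-1) ^ (r - m) * c 1 m = \<dots>" .
  have "c 1 m = (-1) ^ (r - m) * ((-1) ^ (r - m) * c 1 m)"
    by (simp add: mult.assoc[symmetric] power_mult_distrib[symmetric])
  then show ?thesis
    unfolding signed A_def compositions_def by (simp add: divide_inverse mult_ac)
qed

end
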